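(* Let $G$ be a connected finite simple graph of order $n$ with at least one edge and maximum degree $\Delta$. If $\Delta\geq \frac{n-2}{3}$, then $\mathrm{es}_{\Delta}(G)\leq\left\lceil\frac{n}{2}\right\rceil$.
   Context: $\mathrm{es}_{\Delta}(G)$ is the minimum number of edges of $G$ whose removal results in a subgraph with maximum degree $\Delta(G)-1$. *)

theory Defs
  imports Complex_Main
begin

definition simple_graph :: "'a set \<Rightarrow> 'a set set \<Rightarrow> bool" where
  "simple_graph V E \<longleftrightarrow> finite V \<and> (\<forall>e\<in>E. e \<subseteq> V \<and> card e = 2)"

definition degree :: "'a set set \<Rightarrow> 'a \<Rightarrow> nat" where
  "degree E v = card {e\<in>E. v \<in> e}"

definition max_degree :: "'a set \<Rightarrow> 'a set set \<Rightarrow> nat" where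
  "max_degree V E = Max (insert 0 (degree E ` V))"

definition connected_graph :: "'a set \<Rightarrow> 'a set set \<Rightarrow> bool" where
  "connected_graph V E \<longleftrightarrow> V \<noteq> {} \<and>
     (\<forall>u\<in>V. \<forall>v\<in>V. \<exists>p. p \<noteq> [] \<and> hd p = u \<and> last p = v \<and>
        (\<forall>i < length p - 1. {p ! i, p ! Suc i} \<in> E))"

definition es_Delta :: "'a set \<Rightarrow> 'a set set \<Rightarrow> nat" where
  "es_Delta V E = (LEAST k. \<exists>F \<subseteq> E. card F = k \<and> max_degree V (E - F) = max_degree V E - 1)"

end

theory Submission
  imports Defs
begin

text \<open>Let \<open>S\<close> be the set of vertices of maximum degree \<open>\<Delta>\<close>. Deleting an inclusion-minimal set of
  edges covering \<open>S\<close> lowers the maximum degree by exactly one, and a matching \<open>M\<close> of \<open>G[S]\<close> extends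
  to such a cover with \<open>|S| - |M|\<close> edges; so it suffices to find \<open>M\<close> with \<open>2 (|S| - |M|) \<le> n + 1\<close>.
  Take a maximum matching of \<open>G[S]\<close> and a Tutte--Berge barrier \<open>X\<close> for it (proved via Gallai's
  lemma). If the matching were too small, \<open>Y = X \<union> (V - S)\<close> would leave at least \<open>|Y| + 2\<close>
  components of \<open>G - Y\<close>, all of whose vertices have degree \<open>\<Delta>\<close>. Each component sends an edge
  to \<open>Y\<close>, a component with at most \<open>\<Delta>\<close> vertices sends at least \<open>\<Delta>\<close> edges, and \<open>Y\<close> absorbs at
  most \<open>\<Delta> |Y|\<close>; hence three components have more than \<open>\<Delta>\<close> vertices and \<open>n \<ge> 3\<Delta> + 3\<close>.\<close>

lemma simple_graph_finite_edges: "simple_graph V E \<Longrightarrow> finite E"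
  unfolding simple_graph_def by (metis Pow_iff finite_Pow_iff finite_subset subsetI)

lemma simple_graph_edgeE:
  assumes "simple_graph V E" "e \<in> E"
  obtains x y where "x \<noteq> y" "e = {x, y}"
  using assms unfolding simple_graph_def by (meson card_2_iff)

lemma simple_graph_edge_at:
  assumes "simple_graph V E" "e \<in> E" "v \<in> e"
  obtains w where "w \<noteq> v" "e = {v, w}"
proof -
  obtain x y where xy: "x \<noteq> y" "e = {x, y}" using assms(1,2) by (rule simple_graph_edgeE)
  then consider "v = x" | "v = y" using assms(3) by blast
  then show ?thesis
  proof cases
    case 1
    then show ?thesis using that[of y] xy by simp
  next
    case 2
    then show ?thesis using that[of x] xy by (simp add: insert_commute)
  qed
qed

lemma simple_graph_edge_eq:
  assumes "simple_graph V E" "e \<in> E" "a \<in> e" "b \<in> e" "a \<noteq> b"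
  shows "e = {a, b}"
proof -
  obtain x y where "x \<noteq> y" "e = {x, y}" using assms(1,2) by (rule simple_graph_edgeE)
  then show ?thesis using assms(3-5) by auto
qed

lemma degree_le_max_degree: "finite V \<Longrightarrow> v \<in> V \<Longrightarrow> degree E v \<le> max_degree V E"
  unfolding max_degree_def by (simp add: Max_ge)

lemma max_degree_eqI:
  assumes "finite V" "\<forall>u\<in>V. degree E u \<le> d" "v \<in> V" "degree E v = d"
  shows "max_degree V E = d"
  unfolding max_degree_def using assms by (intro Max_eqI) auto

lemma degree_pos: "finite E \<Longrightarrow> e \<in> E \<Longrightarrow> v \<in> e \<Longrightarrow> 0 < degree E v"
  unfolding degree_def by (auto simp: card_gt_0_iff)

lemma degree_Diff_le: "finite E \<Longrightarrow> degree (E - F) v \<le> degree E v"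
  unfolding degree_def by (intro card_mono) auto

lemma max_degree_pos:
  assumes "simple_graph V E" "E \<noteq> {}"
  shows "0 < max_degree V E"
proof -
  obtain e where "e \<in> E" using assms(2) by blast
  moreover obtain x y where "e = {x, y}" using assms(1) \<open>e \<in> E\<close> by (rule simple_graph_edgeE)
  moreover have "x \<in> V" "finite V" using assms(1) calculation by (auto simp: simple_graph_def)
  ultimately have "0 < degree E x"
    using degree_pos[OF simple_graph_finite_edges[OF assms(1)], of e x] by simp
  also have "\<dots> \<le> max_degree V E" using \<open>finite V\<close> \<open>x \<in> V\<close> by (rule degree_le_max_degree)
  finally show ?thesis .
qed

section \<open>Matchings and the Tutte--Berge barrier\<close>

definition matching :: "'a set set \<Rightarrow> 'a set set \<Rightarrow> bool" where
  "matching A M \<longleftrightarrow> M \<subseteq> A \<and> pairwise disjnt M"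

definition max_matching :: "'a set set \<Rightarrow> 'a set set \<Rightarrow> bool" where
  "max_matching A M \<longleftrightarrow> matching A M \<and> (\<forall>M'. matching A M' \<longrightarrow> card M' \<le> card M)"

lemma max_matching_exists:
  assumes "simple_graph V A"
  obtains M where "max_matching A M"
proof -
  have "finite A" using assms by (rule simple_graph_finite_edges)
  then have "card M < Suc (card A)" if "matching A M" for M
    using that by (simp add: matching_def card_mono le_imp_less_Suc)
  moreover have "matching A {}" by (simp add: matching_def)
  ultimately show ?thesis
    using ex_has_greatest_nat[of "matching A" "{}" card "Suc (card A)"] that
    unfolding max_matching_def by blast
qed

lemma card_Union_matching:
  assumes "simple_graph V A" "matching A M"
  shows "card (\<Union>M) = 2 * card M"
proof -
  have edges: "card e = 2" "finite e" if "e \<in> M" for e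
  proof -
    show "card e = 2" using assms that unfolding simple_graph_def matching_def by blast
    then show "finite e" by (intro card_ge_0_finite) simp
  qed
  have "finite M"
    using assms simple_graph_finite_edges finite_subset unfolding matching_def by blast
  then have "card (\<Union>M) = (\<Sum>e\<in>M. card e)"
    using assms(2) edges by (intro card_Union_disjoint) (auto simp: matching_def)
  then show ?thesis using edges by simp
qed

lemma card_Diff_Union_matching:
  assumes "simple_graph V A" "matching A M" "\<Union>M \<subseteq> S" "finite S"
  shows "card (S - \<Union>M) + 2 * card M = card S"
  using card_Union_matching[OF assms(1,2)] card_mono[OF assms(4,3)] assms(3,4)
  by (simp add: card_Diff_subset finite_subset)

lemma card_lt_max_matching_avoiding:
  assumes "max_matching A M0" "\<And>N. max_matching A N \<Longrightarrow> v \<in> \<Union>N" "matching A M" "v \<notin> \<Union>M"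
  shows "card M < card M0"
proof -
  have "card M \<le> card M0" using assms(1,3) by (simp add: max_matching_def)
  moreover have "\<not> max_matching A M" using assms(2,4) by blast
  then have "card M \<noteq> card M0" using assms(1,3) by (auto simp: max_matching_def)
  ultimately show ?thesis by simp
qed

lemma max_matching_meets_edge:
  assumes "simple_graph V A" "max_matching A M" "e \<in> A"
  shows "e \<inter> \<Union>M \<noteq> {}"
proof
  assume disj: "e \<inter> \<Union>M = {}"
  have "e \<noteq> {}" using assms(1,3) by (auto elim: simple_graph_edgeE)
  then have "e \<notin> M" using disj by auto
  moreover have "finite M"
    using assms simple_graph_finite_edges finite_subset unfolding max_matching_def matching_def by blast
  moreover have "matching A (insert e M)"
    using assms(2,3) disj unfolding max_matching_def matching_def
    by (auto simp: pairwise_insert disjnt_def)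
  ultimately show False using assms(2) unfolding max_matching_def by fastforce
qed

text \<open>The edge of \<open>M\<close> at \<open>z\<close> replaces the edge of \<open>N\<close> that blocks it.\<close>
lemma max_matching_exchange:
  assumes "simple_graph V A" "max_matching A M" "max_matching A N" "z \<in> \<Union>M" "z \<notin> \<Union>N"
  obtains N' where "max_matching A N'" "\<Union>N' \<subseteq> insert z (\<Union>N)" "card (N' - M) < card (N - M)"
proof -
  have M: "M \<subseteq> A" "pairwise disjnt M" and N: "N \<subseteq> A" "pairwise disjnt N"
    using assms(2,3) unfolding max_matching_def matching_def by auto
  obtain e where e: "e \<in> M" "z \<in> e" using assms(4) by blast
  have "e \<in> A" using e(1) M(1) by blast
  then obtain y where ezy: "y \<noteq> z" "e = {z, y}" by (rule simple_graph_edge_at[OF assms(1) _ e(2)])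
  have "y \<in> \<Union>N"
    using max_matching_meets_edge[OF assms(1,3)] M(1) e ezy assms(5) by blast
  then obtain f where f: "f \<in> N" "y \<in> f" by blast
  have "f \<noteq> e" using f(1) e(2) assms(5) by blast
  have "f \<notin> M"
  proof
    assume "f \<in> M"
    then have "disjnt f e" using M(2) e(1) \<open>f \<noteq> e\<close> by (simp add: pairwise_def)
    then show False using f(2) ezy by (simp add: disjnt_def)
  qed
  define N' where "N' = insert e (N - {f})"
  have "disjnt e k" if "k \<in> N - {f}" for k
    using that f N(2) ezy assms(5) unfolding pairwise_def disjnt_def by blast
  moreover have "pairwise disjnt (N - {f})" using N(2) by (rule pairwise_subset) blast
  ultimately have "matching A N'"
    using N(1) M(1) e(1) unfolding N'_def matching_def by (auto simp: pairwise_insert disjnt_sym)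
  moreover have "finite N"
    using assms(1) N(1) simple_graph_finite_edges finite_subset by blast
  moreover have "e \<notin> N" using e(2) assms(5) by blast
  ultimately have "max_matching A N'"
    using assms(3) f(1) card_Suc_Diff1[of N f] unfolding max_matching_def N'_def by simp
  moreover have "\<Union>N' \<subseteq> insert z (\<Union>N)"
    unfolding N'_def using ezy \<open>y \<in> \<Union>N\<close> by blast
  moreover have "card (N' - M) < card (N - M)"
  proof -
    have "N' - M = (N - M) - {f}" unfolding N'_def using e(1) by blast
    then show ?thesis using \<open>finite N\<close> f(1) \<open>f \<notin> M\<close> card_Diff1_less[of "N - M" f] by simp
  qed
  ultimately show ?thesis by (rule that)
qed

definition induced_adj :: "'a set set \<Rightarrow> 'a set \<Rightarrow> ('a \<times> 'a) set" where
  "induced_adj A Z = {(x, y). {x, y} \<in> A \<and> x \<in> Z \<and> y \<in> Z}"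

lemma card_Union_max_matching_Diff:
  assumes "simple_graph V A" "max_matching A M" "max_matching A N"
  shows "card (\<Union>M - \<Union>N) = card (\<Union>N - \<Union>M)"
proof -
  have "finite (\<Union>M)" "finite (\<Union>N)"
    using assms unfolding simple_graph_def max_matching_def matching_def
    by (meson Sup_le_iff finite_subset subsetD)+
  moreover have "card (\<Union>M) = card (\<Union>N)"
    using assms card_Union_matching[OF assms(1)] unfolding max_matching_def by (metis le_antisym)
  ultimately show ?thesis by (simp add: card_Diff_subset_Int Int_commute)
qed

text \<open>An exchange at a vertex of \<open>\<Union>M - \<Union>N\<close> other than \<open>w\<close> would bring \<open>N\<close> closer to \<open>M\<close>.\<close>
lemma card_Diff_Union_closest_max_matching:
  assumes "simple_graph V A" "max_matching A M" "max_matching A N" "w \<notin> \<Union>N"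
    and closest: "\<And>N'. max_matching A N' \<Longrightarrow> w \<notin> \<Union>N' \<Longrightarrow> card (N - M) \<le> card (N' - M)"
  shows "card (\<Union>N - \<Union>M) \<le> 1"
proof -
  have "\<Union>M - \<Union>N \<subseteq> {w}"
  proof
    fix z assume z: "z \<in> \<Union>M - \<Union>N"
    show "z \<in> {w}"
    proof (rule ccontr)
      assume "z \<notin> {w}"
      obtain N' where "max_matching A N'" "\<Union>N' \<subseteq> insert z (\<Union>N)" "card (N' - M) < card (N - M)"
        using z max_matching_exchange[OF assms(1-3)] by blast
      then show False using closest assms(4) \<open>z \<notin> {w}\<close> by fastforce
    qed
  qed
  then have "card (\<Union>M - \<Union>N) \<le> card {w}" by (intro card_mono) auto
  then show ?thesis using card_Union_max_matching_Diff[OF assms(1-3)] by simp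
qed

lemma gallai_lemma:
  assumes "simple_graph V A"
    and missed: "\<forall>w\<in>Z. \<exists>N. max_matching A N \<and> w \<notin> \<Union>N"
    and "(u, v) \<in> (induced_adj A Z)\<^sup>*"
    and "max_matching A M" "u \<notin> \<Union>M" "v \<notin> \<Union>M"
  shows "u = v"
  using assms(3-6)
proof (induction arbitrary: M rule: converse_rtrancl_induct)
  case base
  then show ?case by simp
next
  case (step u w)
  have uw: "{u, w} \<in> A" "w \<in> Z" using step.hyps(1) unfolding induced_adj_def by auto
  have "w \<in> \<Union>M"
    using max_matching_meets_edge[OF assms(1) step.prems(1) uw(1)] step.prems(2) by blast
  obtain N0 where "max_matching A N0" "w \<notin> \<Union>N0" using missed uw(2) by blast
  then obtain N where N: "max_matching A N" "w \<notin> \<Union>N"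
    and closest: "\<And>N'. max_matching A N' \<Longrightarrow> w \<notin> \<Union>N' \<Longrightarrow> card (N - M) \<le> card (N' - M)"
    using ex_has_least_nat[of "\<lambda>N. max_matching A N \<and> w \<notin> \<Union>N" N0 "\<lambda>N. card (N - M)"] by blast
  have "u \<in> \<Union>N"
    using max_matching_meets_edge[OF assms(1) N(1) uw(1)] N(2) by blast
  moreover have "v \<in> \<Union>N"
    using step.IH[OF N] \<open>w \<in> \<Union>M\<close> step.prems(3) by blast
  ultimately have "{u, v} \<subseteq> \<Union>N - \<Union>M" using step.prems(2,3) by blast
  moreover have "finite (\<Union>N - \<Union>M)"
    using assms(1) N(1) unfolding simple_graph_def max_matching_def matching_def
    by (meson Diff_subset Sup_le_iff finite_subset subsetD)
  ultimately have "card {u, v} \<le> 1"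
    using card_Diff_Union_closest_max_matching[OF assms(1) step.prems(1) N closest] card_mono
    by (meson order_trans)
  then show "u = v" by (cases "u = v") simp_all
qed

text \<open>The weak half of the Tutte--Berge formula, \<open>|W| - 2|M| \<le> c(W - X) - |X|\<close>, with the
  components of \<open>W - X\<close> counted through representatives \<open>R\<close>.\<close>
definition tutte_berge_witness ::
    "'a set \<Rightarrow> 'a set set \<Rightarrow> 'a set set \<Rightarrow> 'a set \<Rightarrow> 'a set \<Rightarrow> bool" where
  "tutte_berge_witness W A M X R \<longleftrightarrow> matching A M \<and> X \<subseteq> W \<and> R \<subseteq> W - X \<and>
     card W + card X \<le> 2 * card M + card R \<and>
     (\<forall>r\<in>R. \<forall>r'\<in>R. (r, r') \<in> (induced_adj A (W - X))\<^sup>* \<longrightarrow> r = r')"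

lemma tutte_berge_witness_insert:
  assumes "finite W" "v \<in> W" "tutte_berge_witness (W - {v}) {e\<in>A. v \<notin> e} M X R"
    and "matching A M0" "card M < card M0"
  shows "tutte_berge_witness W A M0 (insert v X) R"
proof -
  have "finite X" "v \<notin> X" "X \<subseteq> W"
    using assms(1,3) finite_subset unfolding tutte_berge_witness_def by auto
  moreover have "card W = Suc (card (W - {v}))" using assms(1,2) by (rule card_Suc_Diff1[symmetric])
  ultimately have "card W + card (insert v X) \<le> 2 * card M0 + card R"
    using assms(3,5) unfolding tutte_berge_witness_def by simp
  moreover have "induced_adj {e\<in>A. v \<notin> e} (W - {v} - X) = induced_adj A (W - insert v X)"
    unfolding induced_adj_def by auto
  ultimately show ?thesis
    using assms(2-4) \<open>X \<subseteq> W\<close> unfolding tutte_berge_witness_def by auto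
qed

text \<open>Vertices covered by every maximum matching are moved into the barrier one at a time; when
  none is left, Gallai's lemma gives a witness with empty barrier.\<close>
lemma exists_tutte_berge_witness:
  assumes "simple_graph W A"
  shows "\<exists>M X R. tutte_berge_witness W A M X R"
  using assms
proof (induction "card W" arbitrary: W A rule: less_induct)
  case less
  obtain M0 where M0: "max_matching A M0" using max_matching_exists[OF less.prems] .
  then have "matching A M0" by (simp add: max_matching_def)
  have finW: "finite W" using less.prems by (simp add: simple_graph_def)
  show ?case
  proof (cases "\<forall>w\<in>W. \<exists>N. max_matching A N \<and> w \<notin> \<Union>N")
    case True
    have "\<Union>M0 \<subseteq> W"
      using \<open>matching A M0\<close> less.prems unfolding matching_def simple_graph_def by blast
    then have "card W + card {} \<le> 2 * card M0 + card (W - \<Union>M0)"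
      using card_Diff_Union_matching[OF less.prems \<open>matching A M0\<close> _ finW] by simp
    moreover have "\<forall>r\<in>W - \<Union>M0. \<forall>r'\<in>W - \<Union>M0. (r, r') \<in> (induced_adj A (W - {}))\<^sup>* \<longrightarrow> r = r'"
      using gallai_lemma[OF less.prems True _ M0] by simp
    ultimately have "tutte_berge_witness W A M0 {} (W - \<Union>M0)"
      using \<open>matching A M0\<close> unfolding tutte_berge_witness_def by simp
    then show ?thesis by blast
  next
    case False
    then obtain v where v: "v \<in> W" "\<And>N. max_matching A N \<Longrightarrow> v \<in> \<Union>N" by blast
    have "simple_graph (W - {v}) {e\<in>A. v \<notin> e}" using less.prems unfolding simple_graph_def by blast
    moreover have "card (W - {v}) < card W" using finW v(1) by (rule card_Diff1_less)
    ultimately obtain M X R where IH: "tutte_berge_witness (W - {v}) {e\<in>A. v \<notin> e} M X R"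
      using less.hyps by blast
    then have "matching A M" "v \<notin> \<Union>M" unfolding tutte_berge_witness_def matching_def by auto
    then have "card M < card M0" using card_lt_max_matching_avoiding[OF M0 v(2)] by blast
    then have "tutte_berge_witness W A M0 (insert v X) R"
      using tutte_berge_witness_insert[OF finW v(1) IH \<open>matching A M0\<close>] by blast
    then show ?thesis by blast
  qed
qed

section \<open>Components outside a separator\<close>

definition induced_component :: "'a set set \<Rightarrow> 'a set \<Rightarrow> 'a \<Rightarrow> 'a set" where
  "induced_component A Z r = {v. (r, v) \<in> (induced_adj A Z)\<^sup>*}"

definition edges_between :: "'a set set \<Rightarrow> 'a set \<Rightarrow> 'a set \<Rightarrow> 'a set set" where
  "edges_between E K Y = {e\<in>E. e \<inter> K \<noteq> {} \<and> e \<inter> Y \<noteq> {}}"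

lemma induced_component_self [simp]: "r \<in> induced_component A Z r"
  by (simp add: induced_component_def)

lemma induced_component_subset: "r \<in> Z \<Longrightarrow> induced_component A Z r \<subseteq> Z"
proof
  fix v assume "r \<in> Z" "v \<in> induced_component A Z r"
  then have "(r, v) \<in> (induced_adj A Z)\<^sup>*" by (simp add: induced_component_def)
  then show "v \<in> Z" using \<open>r \<in> Z\<close> by induction (auto simp: induced_adj_def)
qed

lemma induced_component_neighbour:
  assumes "simple_graph V E" "r \<in> V - Y" "v \<in> induced_component E (V - Y) r" "{v, w} \<in> E"
  shows "w \<in> induced_component E (V - Y) r \<union> Y"
proof -
  have "v \<in> V - Y" using induced_component_subset[OF assms(2)] assms(3) by blast
  moreover have "w \<in> V" using assms(1,4) by (auto simp: simple_graph_def)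
  ultimately have "w \<in> Y \<or> (v, w) \<in> induced_adj E (V - Y)"
    using assms(4) by (auto simp: induced_adj_def)
  then show ?thesis using assms(3) unfolding induced_component_def by auto
qed

lemma induced_component_disjoint:
  assumes "(r, r') \<notin> (induced_adj A Z)\<^sup>*"
  shows "induced_component A Z r \<inter> induced_component A Z r' = {}"
proof -
  have "sym ((induced_adj A Z)\<^sup>*)"
    by (intro sym_rtrancl) (auto simp: sym_def induced_adj_def insert_commute)
  then show ?thesis
    using assms unfolding induced_component_def by (auto dest: symD intro: rtrancl_trans)
qed

lemma sum_card_edges_between_le:
  assumes "simple_graph V E" "Y \<subseteq> V" "\<forall>y\<in>Y. degree E y \<le> D" "finite I"
    and disj: "\<forall>i\<in>I. \<forall>j\<in>I. i \<noteq> j \<longrightarrow> K i \<inter> K j = {}" and "\<forall>i\<in>I. K i \<inter> Y = {}"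
  shows "(\<Sum>i\<in>I. card (edges_between E (K i) Y)) \<le> card Y * D"
proof -
  have finE: "finite E" using assms(1) by (rule simple_graph_finite_edges)
  have finY: "finite Y" using assms(1,2) finite_subset by (auto simp: simple_graph_def)
  have "edges_between E (K i) Y \<inter> edges_between E (K j) Y = {}" if "i \<in> I" "j \<in> I" "i \<noteq> j" for i j
  proof (rule ccontr)
    assume "edges_between E (K i) Y \<inter> edges_between E (K j) Y \<noteq> {}"
    then obtain e a b c where e: "e \<in> E" "a \<in> e" "a \<in> K i" "b \<in> e" "b \<in> K j" "c \<in> e" "c \<in> Y"
      unfolding edges_between_def by blast
    moreover have "a \<noteq> b" using disj that e(3,5) by blast
    ultimately have "e = {a, b}" by (intro simple_graph_edge_eq[OF assms(1)])
    then show False using assms(6) that e by blast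
  qed
  then have "(\<Sum>i\<in>I. card (edges_between E (K i) Y)) = card (\<Union>i\<in>I. edges_between E (K i) Y)"
    using assms(4) finE by (intro card_UN_disjoint[symmetric]) (auto simp: edges_between_def)
  also have "\<dots> \<le> card (\<Union>y\<in>Y. {e\<in>E. y \<in> e})"
    using finE finY by (intro card_mono) (auto simp: edges_between_def)
  also have "\<dots> \<le> (\<Sum>y\<in>Y. degree E y)"
    unfolding degree_def using finY by (rule card_UN_le)
  also have "\<dots> \<le> card Y * D"
    using assms(3) sum_bounded_above[of Y "degree E" D] by simp
  finally show ?thesis .
qed

lemma le_mult_Suc_diff:
  fixes D k :: nat
  assumes "1 \<le> k" "k \<le> D"
  shows "D \<le> k * (D + 1 - k)"
proof -
  obtain a c where "k = a + 1" "D = k + c" using assms by (metis add.commute le_Suc_ex Suc_eq_plus1)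
  then show ?thesis by (simp add: algebra_simps)
qed

lemma degree_le_card_edges_to_add:
  assumes "simple_graph V E" "finite K" "v \<in> K" and closed: "\<forall>w. {v, w} \<in> E \<longrightarrow> w \<in> K \<union> Y"
  shows "degree E v \<le> card {e\<in>E. v \<in> e \<and> e \<inter> Y \<noteq> {}} + (card K - 1)"
proof -
  let ?B = "{e\<in>E. v \<in> e \<and> e \<inter> Y \<noteq> {}}"
  have finE: "finite E" using assms(1) by (rule simple_graph_finite_edges)
  have "{e\<in>E. v \<in> e} \<subseteq> ?B \<union> (\<lambda>w. {v, w}) ` (K - {v})"
  proof
    fix e assume "e \<in> {e\<in>E. v \<in> e}"
    then have e: "e \<in> E" "v \<in> e" by auto
    then obtain w where w: "w \<noteq> v" "e = {v, w}" by (rule simple_graph_edge_at[OF assms(1)])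
    then have "w \<in> K \<union> Y" using closed e(1) by blast
    then show "e \<in> ?B \<union> (\<lambda>w. {v, w}) ` (K - {v})" using e w by blast
  qed
  then have "degree E v \<le> card (?B \<union> (\<lambda>w. {v, w}) ` (K - {v}))"
    unfolding degree_def using finE assms(2) by (intro card_mono) auto
  also have "\<dots> \<le> card ?B + card ((\<lambda>w. {v, w}) ` (K - {v}))" by (rule card_Un_le)
  also have "\<dots> \<le> card ?B + card (K - {v})"
    using card_image_le[of "K - {v}" "\<lambda>w. {v, w}"] assms(2) by simp
  finally show ?thesis using assms(2,3) by simp
qed

lemma card_edges_between_ge_degree:
  assumes "simple_graph V E" "finite K" "K \<noteq> {}" "card K \<le> D" "K \<inter> Y = {}"
    and deg: "\<forall>v\<in>K. D \<le> degree E v" and closed: "\<forall>v\<in>K. \<forall>w. {v, w} \<in> E \<longrightarrow> w \<in> K \<union> Y"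
  shows "D \<le> card (edges_between E K Y)"
proof -
  let ?B = "\<lambda>v. {e\<in>E. v \<in> e \<and> e \<inter> Y \<noteq> {}}"
  have finE: "finite E" using assms(1) by (rule simple_graph_finite_edges)
  have "card K > 0" using assms(2,3) card_gt_0_iff by blast
  have "D + 1 - card K \<le> card (?B v)" if "v \<in> K" for v
  proof -
    have "D \<le> degree E v" using deg that by blast
    also have "\<dots> \<le> card (?B v) + (card K - 1)"
      using closed that by (intro degree_le_card_edges_to_add[OF assms(1,2) that]) blast
    finally show ?thesis using \<open>card K > 0\<close> by linarith
  qed
  then have "card K * (D + 1 - card K) \<le> (\<Sum>v\<in>K. card (?B v))"
    using sum_bounded_below[of K "D + 1 - card K" "\<lambda>v. card (?B v)"] by simp
  also have "\<dots> = card (\<Union>v\<in>K. ?B v)"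
  proof (rule card_UN_disjoint[symmetric])
    show "\<forall>v\<in>K. \<forall>v'\<in>K. v \<noteq> v' \<longrightarrow> ?B v \<inter> ?B v' = {}"
    proof (intro ballI impI)
      fix v v' assume "v \<in> K" "v' \<in> K" "v \<noteq> v'"
      have "e \<inter> Y = {}" if "e \<in> E" "v \<in> e" "v' \<in> e" for e
        using simple_graph_edge_eq[OF assms(1) that \<open>v \<noteq> v'\<close>] \<open>v \<in> K\<close> \<open>v' \<in> K\<close> assms(5) by blast
      then show "?B v \<inter> ?B v' = {}" by blast
    qed
  qed (use assms(2) finE in auto)
  also have "\<dots> \<le> card (edges_between E K Y)"
    using finE by (intro card_mono) (auto simp: edges_between_def)
  finally show ?thesis
    using le_mult_Suc_diff[of "card K" D] assms(4) \<open>card K > 0\<close> by simp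
qed

lemma exists_nth_crossing:
  "p \<noteq> [] \<Longrightarrow> P (hd p) \<Longrightarrow> \<not> P (last p) \<Longrightarrow> \<exists>i < length p - 1. P (p ! i) \<and> \<not> P (p ! Suc i)"
proof (induction p)
  case Nil
  then show ?case by simp
next
  case (Cons x xs)
  show ?case
  proof (cases "xs \<noteq> [] \<and> P (hd xs)")
    case True
    then obtain i where "i < length xs - 1" "P (xs ! i)" "\<not> P (xs ! Suc i)"
      using Cons by auto
    then show ?thesis by (intro exI[of _ "Suc i"]) auto
  next
    case False
    moreover have "xs \<noteq> []" using Cons.prems by auto
    ultimately show ?thesis using Cons.prems by (intro exI[of _ 0]) (auto simp: hd_conv_nth)
  qed
qed

lemma edges_between_nonempty:
  assumes "connected_graph V E" "K \<subseteq> V" "r \<in> K" "r' \<in> V - K"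
    and closed: "\<forall>v\<in>K. \<forall>w. {v, w} \<in> E \<longrightarrow> w \<in> K \<union> Y"
  shows "edges_between E K Y \<noteq> {}"
proof -
  obtain p where p: "p \<noteq> []" "hd p = r" "last p = r'" "\<forall>i < length p - 1. {p ! i, p ! Suc i} \<in> E"
    using assms(1-4) unfolding connected_graph_def by blast
  then obtain i where "i < length p - 1" "p ! i \<in> K" "p ! Suc i \<notin> K"
    using exists_nth_crossing[of p "\<lambda>x. x \<in> K"] assms(3,4) by auto
  then show ?thesis
    using p(4) closed unfolding edges_between_def by blast
qed

lemma card_edges_between_component_ge:
  assumes "simple_graph V E" "r \<in> V - Y" "\<forall>v\<in>V - Y. D \<le> degree E v"
    and "card (induced_component E (V - Y) r) \<le> D"
  shows "D \<le> card (edges_between E (induced_component E (V - Y) r) Y)"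
proof (rule card_edges_between_ge_degree[OF assms(1) _ _ assms(4)])
  let ?K = "induced_component E (V - Y) r"
  have "?K \<subseteq> V - Y" using assms(2) by (rule induced_component_subset)
  then show "finite ?K" "?K \<inter> Y = {}" "\<forall>v\<in>?K. D \<le> degree E v"
    using assms(1,3) by (auto simp: simple_graph_def intro: finite_subset)
  show "?K \<noteq> {}" using induced_component_self[of r E "V - Y"] by blast
  show "\<forall>v\<in>?K. \<forall>w. {v, w} \<in> E \<longrightarrow> w \<in> ?K \<union> Y"
    using induced_component_neighbour[OF assms(1,2)] by blast
qed

lemma edges_between_component_nonempty:
  assumes "simple_graph V E" "connected_graph V E" "r \<in> V - Y" "r' \<in> V - Y"
    and "(r, r') \<notin> (induced_adj E (V - Y))\<^sup>*"
  shows "edges_between E (induced_component E (V - Y) r) Y \<noteq> {}"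
proof (rule edges_between_nonempty[OF assms(2)])
  let ?K = "induced_component E (V - Y) r"
  show "?K \<subseteq> V" using induced_component_subset[OF assms(3)] by blast
  show "r \<in> ?K" by simp
  show "r' \<in> V - ?K" using assms(4,5) by (simp add: induced_component_def)
  show "\<forall>v\<in>?K. \<forall>w. {v, w} \<in> E \<longrightarrow> w \<in> ?K \<union> Y"
    using induced_component_neighbour[OF assms(1,3)] by blast
qed

lemma many_big_components_arith:
  fixes D s b y :: nat
  assumes "1 \<le> D" "D * s + b \<le> y * D" "y + 2 \<le> s + b"
  shows "3 \<le> b"
proof (rule ccontr)
  assume "\<not> 3 \<le> b"
  then consider "b = 0" | "b = 1" | "b = 2" by linarith
  then have "D * b < D * 2 + b" using assms(1) by cases simp_all
  moreover have "D * (y + 2) \<le> D * (s + b)" using assms(3) by (rule mult_le_mono2)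
  ultimately show False using assms(1,2) unfolding distrib_left mult.commute[of y D] by linarith
qed

lemma three_le_card_big_components:
  assumes "simple_graph V E" "connected_graph V E" "1 \<le> D"
    and deg_le: "\<forall>v\<in>V. degree E v \<le> D" and "Y \<subseteq> V" and deg_eq: "\<forall>v\<in>V - Y. degree E v = D"
    and "R \<subseteq> V - Y" and R_apart: "\<forall>r\<in>R. \<forall>r'\<in>R. (r, r') \<in> (induced_adj E (V - Y))\<^sup>* \<longrightarrow> r = r'"
    and card_R: "card Y + 2 \<le> card R"
  shows "3 \<le> card {r\<in>R. D < card (induced_component E (V - Y) r)}"
proof -
  define K where "K = induced_component E (V - Y)"
  define B where "B r = card (edges_between E (K r) Y)" for r
  define Rb where "Rb = {r\<in>R. D < card (K r)}"
  have finR: "finite R" using assms(1,7) finite_subset by (auto simp: simple_graph_def)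
  have "Rb \<subseteq> R" by (simp add: Rb_def)
  have "D \<le> B r" if "r \<in> R - Rb" for r
    unfolding B_def K_def using that deg_eq assms(7)
    by (intro card_edges_between_component_ge[OF assms(1)]) (auto simp: Rb_def K_def)
  then have "D * card (R - Rb) \<le> sum B (R - Rb)"
    using sum_bounded_below[of "R - Rb" D B] by (simp add: mult.commute)
  moreover have "1 \<le> B r" if "r \<in> R" for r
  proof -
    have "\<not> card R \<le> 1" using card_R by linarith
    then obtain r' where "r' \<in> R" "r' \<noteq> r" using that card_le_Suc0_iff_eq[OF finR] by auto
    then have "edges_between E (K r) Y \<noteq> {}"
      unfolding K_def using R_apart that assms(7)
      by (intro edges_between_component_nonempty[OF assms(1,2)]) blast+
    moreover have "finite (edges_between E (K r) Y)"
      using simple_graph_finite_edges[OF assms(1)] by (simp add: edges_between_def)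
    ultimately show ?thesis by (simp add: B_def Suc_le_eq card_gt_0_iff)
  qed
  then have "card Rb \<le> sum B Rb" using \<open>Rb \<subseteq> R\<close> sum_bounded_below[of Rb 1 B] by auto
  ultimately have "D * card (R - Rb) + card Rb \<le> sum B R"
    unfolding sum.subset_diff[OF \<open>Rb \<subseteq> R\<close> finR] by (rule add_mono)
  also have "\<dots> \<le> card Y * D"
    unfolding B_def
  proof (rule sum_card_edges_between_le[OF assms(1,5) _ finR])
    show "\<forall>y\<in>Y. degree E y \<le> D" using deg_le assms(5) by blast
    show "\<forall>r\<in>R. \<forall>r'\<in>R. r \<noteq> r' \<longrightarrow> K r \<inter> K r' = {}"
      using R_apart unfolding K_def by (auto intro!: induced_component_disjoint)
    show "\<forall>r\<in>R. K r \<inter> Y = {}"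
      using assms(7) induced_component_subset[of _ "V - Y" E] unfolding K_def by blast
  qed
  finally show ?thesis
    using many_big_components_arith[OF assms(3)] card_R finR \<open>Rb \<subseteq> R\<close>
    by (simp add: K_def Rb_def card_Diff_subset card_mono finite_subset)
qed

lemma card_ge_of_regular_components:
  assumes "simple_graph V E" "connected_graph V E" "1 \<le> D"
    and deg_le: "\<forall>v\<in>V. degree E v \<le> D" and "Y \<subseteq> V" and deg_eq: "\<forall>v\<in>V - Y. degree E v = D"
    and "R \<subseteq> V - Y" and R_apart: "\<forall>r\<in>R. \<forall>r'\<in>R. (r, r') \<in> (induced_adj E (V - Y))\<^sup>* \<longrightarrow> r = r'"
    and card_R: "card Y + 2 \<le> card R"
  shows "3 * D + 3 \<le> card V"
proof -
  define K where "K = induced_component E (V - Y)"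
  define Rb where "Rb = {r\<in>R. D < card (K r)}"
  have finV: "finite V" using assms(1) by (simp add: simple_graph_def)
  have K_sub: "K r \<subseteq> V" if "r \<in> R" for r
    using that assms(7) induced_component_subset[of r "V - Y" E] unfolding K_def by blast
  have "(\<Sum>r\<in>Rb. D + 1) \<le> (\<Sum>r\<in>Rb. card (K r))"
    by (intro sum_mono) (simp add: Rb_def)
  also have "\<dots> = card (\<Union>r\<in>Rb. K r)"
    using K_sub finV R_apart assms(7) finite_subset[OF assms(7)] unfolding Rb_def K_def
    by (intro card_UN_disjoint[symmetric] ballI impI induced_component_disjoint)
      (auto intro: finite_subset)
  also have "\<dots> \<le> card V"
    using K_sub finV by (intro card_mono) (auto simp: Rb_def)
  finally have "(D + 1) * card Rb \<le> card V" by (simp add: mult.commute)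
  moreover have "3 \<le> card Rb"
    using three_le_card_big_components[OF assms] unfolding Rb_def K_def .
  then have "(D + 1) * 3 \<le> (D + 1) * card Rb" by (rule mult_le_mono2)
  ultimately have "(D + 1) * 3 \<le> card V" by linarith
  then show ?thesis by simp
qed

section \<open>Maximum-degree vertices\<close>

definition max_degree_vertices :: "'a set \<Rightarrow> 'a set set \<Rightarrow> 'a set" where
  "max_degree_vertices V E = {v\<in>V. degree E v = max_degree V E}"

lemma max_degree_vertices_nonempty:
  assumes "finite V" "V \<noteq> {}"
  shows "max_degree_vertices V E \<noteq> {}"
proof -
  have "max_degree V E \<in> insert 0 (degree E ` V)"
    unfolding max_degree_def using assms(1) by (intro Max_in) auto
  moreover obtain u where "u \<in> V" using assms(2) by blast
  ultimately show ?thesis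
    using degree_le_max_degree[OF assms(1), of u E] unfolding max_degree_vertices_def by force
qed

lemma max_degree_Diff_cover:
  assumes "simple_graph V E" "F \<subseteq> E" and cover: "\<forall>u\<in>max_degree_vertices V E. \<exists>e\<in>F. u \<in> e"
    and "v \<in> max_degree_vertices V E" "{e\<in>F. v \<in> e} = {f}"
  shows "max_degree V (E - F) = max_degree V E - 1"
proof (rule max_degree_eqI)
  have finE: "finite E" and finV: "finite V"
    using assms(1) simple_graph_finite_edges by (auto simp: simple_graph_def)
  show "finite V" by (rule finV)
  show "\<forall>u\<in>V. degree (E - F) u \<le> max_degree V E - 1"
  proof
    fix u assume "u \<in> V"
    show "degree (E - F) u \<le> max_degree V E - 1"
    proof (cases "u \<in> max_degree_vertices V E")
      case True
      then obtain e where "e \<in> F" "u \<in> e" using cover by blast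
      then have "{e\<in>E - F. u \<in> e} \<subset> {e\<in>E. u \<in> e}" using assms(2) by blast
      then have "degree (E - F) u < degree E u"
        unfolding degree_def using finE by (intro psubset_card_mono) auto
      then show ?thesis using True by (simp add: max_degree_vertices_def)
    next
      case False
      then have "degree E u \<noteq> max_degree V E"
        using \<open>u \<in> V\<close> by (simp add: max_degree_vertices_def)
      then have "degree E u < max_degree V E"
        using degree_le_max_degree[OF finV \<open>u \<in> V\<close>, of E] by simp
      then show ?thesis using degree_Diff_le[OF finE, of F u] by linarith
    qed
  qed
  show "v \<in> V" using assms(4) by (simp add: max_degree_vertices_def)
  have "{e\<in>E - F. v \<in> e} = {e\<in>E. v \<in> e} - {f}" using assms(5) by blast
  moreover have "f \<in> {e\<in>E. v \<in> e}" using assms(2,5) by blast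
  ultimately show "degree (E - F) v = max_degree V E - 1"
    using assms(4) finE by (simp add: degree_def max_degree_vertices_def)
qed

lemma es_Delta_le_card_cover:
  assumes "simple_graph V E" "E \<noteq> {}" "F \<subseteq> E" "\<forall>v\<in>max_degree_vertices V E. \<exists>e\<in>F. v \<in> e"
  shows "es_Delta V E \<le> card F"
proof -
  let ?covers = "\<lambda>F'. F' \<subseteq> F \<and> (\<forall>v\<in>max_degree_vertices V E. \<exists>e\<in>F'. v \<in> e)"
  obtain F' where F': "?covers F'" and F'_min: "\<And>F''. ?covers F'' \<Longrightarrow> card F' \<le> card F''"
    using ex_has_least_nat[of ?covers F card] assms(4) by blast
  have "finite F"
    using assms(1,3) simple_graph_finite_edges finite_subset by blast
  then have "finite F'" using F' finite_subset by blast
  have "V \<noteq> {}" "finite V"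
    using assms(1,2) by (auto simp: simple_graph_def card_2_iff)
  then obtain s where "s \<in> max_degree_vertices V E"
    using max_degree_vertices_nonempty by blast
  then obtain f where "f \<in> F'" using F' by blast
  have "\<not> ?covers (F' - {f})"
  proof
    assume "?covers (F' - {f})"
    then have "card F' \<le> card (F' - {f})" by (rule F'_min)
    then show False using card_Diff1_less[OF \<open>finite F'\<close> \<open>f \<in> F'\<close>] by linarith
  qed
  then obtain v where v: "v \<in> max_degree_vertices V E" "\<forall>e\<in>F' - {f}. v \<notin> e"
    using F' by auto
  have "F' \<subseteq> E" using F' assms(3) by blast
  moreover have "{e\<in>F'. v \<in> e} = {f}" using F' v by blast
  ultimately have "max_degree V (E - F') = max_degree V E - 1"
    using max_degree_Diff_cover[OF assms(1)] F' v(1) by blast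
  then have "es_Delta V E \<le> card F'"
    unfolding es_Delta_def using F' assms(3) by (intro Least_le) blast
  also have "\<dots> \<le> card F" using F' \<open>finite F\<close> by (simp add: card_mono)
  finally show ?thesis .
qed

lemma edge_cover_extending_matching:
  assumes "simple_graph V E" "matching E M" "\<Union>M \<subseteq> S" "finite S" "\<forall>v\<in>S. \<exists>e\<in>E. v \<in> e"
  shows "\<exists>F\<subseteq>E. (\<forall>v\<in>S. \<exists>e\<in>F. v \<in> e) \<and> card F + card M \<le> card S"
proof -
  obtain f where f: "\<forall>v\<in>S. f v \<in> E \<and> v \<in> f v" using assms(5) by metis
  define F where "F = M \<union> f ` (S - \<Union>M)"
  have "M \<subseteq> E" using assms(2) by (simp add: matching_def)
  then have "F \<subseteq> E" using f by (auto simp: F_def)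
  moreover have "\<forall>v\<in>S. \<exists>e\<in>F. v \<in> e" using f by (auto simp: F_def)
  moreover have "card F \<le> card M + card (f ` (S - \<Union>M))"
    unfolding F_def by (rule card_Un_le)
  moreover have "card (f ` (S - \<Union>M)) \<le> card (S - \<Union>M)"
    using assms(4) by (simp add: card_image_le)
  moreover have "card (S - \<Union>M) + 2 * card M = card S"
    using assms(1-4) by (rule card_Diff_Union_matching)
  ultimately have "card F + card M \<le> card S" by linarith
  with \<open>F \<subseteq> E\<close> \<open>\<forall>v\<in>S. \<exists>e\<in>F. v \<in> e\<close> show ?thesis by blast
qed

lemma max_degree_vertex_on_edge:
  assumes "simple_graph V E" "E \<noteq> {}" "v \<in> max_degree_vertices V E"
  shows "\<exists>e\<in>E. v \<in> e"
proof -
  have "card {e\<in>E. v \<in> e} \<noteq> 0"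
    using assms(3) max_degree_pos[OF assms(1,2)] by (simp add: max_degree_vertices_def degree_def)
  then show ?thesis by (metis (no_types, lifting) card.empty empty_Collect_eq)
qed

lemma es_Delta_add_card_matching_le:
  assumes "simple_graph V E" "E \<noteq> {}" "matching E M" "\<Union>M \<subseteq> max_degree_vertices V E"
  shows "es_Delta V E + card M \<le> card (max_degree_vertices V E)"
proof -
  have "finite (max_degree_vertices V E)"
    using assms(1) by (simp add: simple_graph_def max_degree_vertices_def)
  then obtain F where F: "F \<subseteq> E" "\<forall>v\<in>max_degree_vertices V E. \<exists>e\<in>F. v \<in> e"
    "card F + card M \<le> card (max_degree_vertices V E)"
    using edge_cover_extending_matching[OF assms(1,3,4)] max_degree_vertex_on_edge[OF assms(1,2)]
    by blast
  have "es_Delta V E \<le> card F" using es_Delta_le_card_cover[OF assms(1,2) F(1,2)] .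
  with F(3) show ?thesis by linarith
qed

text \<open>A witness for \<open>G[S]\<close> with barrier \<open>X\<close> yields the separator \<open>X \<union> (V - S)\<close> of \<open>G\<close>.\<close>
lemma card_ge_of_max_degree_witness:
  assumes "simple_graph V E" "connected_graph V E" "E \<noteq> {}"
    and "S = max_degree_vertices V E" "tutte_berge_witness S {e\<in>E. e \<subseteq> S} M X R"
    and "2 * card M + card V + 2 \<le> 2 * card S"
  shows "3 * max_degree V E + 3 \<le> card V"
proof -
  define Y where "Y = X \<union> (V - S)"
  have finV: "finite V" using assms(1) by (simp add: simple_graph_def)
  have "S \<subseteq> V" using assms(4) by (auto simp: max_degree_vertices_def)
  have MXR: "X \<subseteq> S" "R \<subseteq> S - X" "card S + card X \<le> 2 * card M + card R"
    "\<forall>r\<in>R. \<forall>r'\<in>R. (r, r') \<in> (induced_adj {e\<in>E. e \<subseteq> S} (S - X))\<^sup>* \<longrightarrow> r = r'"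
    using assms(5) unfolding tutte_berge_witness_def by auto
  have "Y \<subseteq> V" and V_Y: "V - Y = S - X"
    using MXR(1) \<open>S \<subseteq> V\<close> by (auto simp: Y_def)
  have "finite S" using \<open>S \<subseteq> V\<close> finV by (rule finite_subset)
  have "finite X" using MXR(1) \<open>finite S\<close> by (rule finite_subset)
  then have "card Y = card X + card (V - S)"
    unfolding Y_def using finV MXR(1) by (intro card_Un_disjoint) auto
  also have "card (V - S) = card V - card S"
    using \<open>finite S\<close> \<open>S \<subseteq> V\<close> by (rule card_Diff_subset)
  finally have card_R: "card Y + 2 \<le> card R"
    using MXR(3) assms(6) card_mono[OF finV \<open>S \<subseteq> V\<close>] by linarith
  have "induced_adj {e\<in>E. e \<subseteq> S} (S - X) = induced_adj E (V - Y)"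
    unfolding V_Y by (auto simp: induced_adj_def)
  then have R_apart: "\<forall>r\<in>R. \<forall>r'\<in>R. (r, r') \<in> (induced_adj E (V - Y))\<^sup>* \<longrightarrow> r = r'"
    using MXR(4) by simp
  have deg_eq: "\<forall>v\<in>V - Y. degree E v = max_degree V E"
    unfolding V_Y using MXR(1) assms(4) by (auto simp: max_degree_vertices_def)
  have D_pos: "1 \<le> max_degree V E" using max_degree_pos[OF assms(1,3)] by simp
  have deg_le: "\<forall>v\<in>V. degree E v \<le> max_degree V E" using degree_le_max_degree[OF finV] by blast
  have R_sub: "R \<subseteq> V - Y" using MXR(2) V_Y by simp
  show ?thesis
    by (rule card_ge_of_regular_components[OF assms(1,2) D_pos deg_le \<open>Y \<subseteq> V\<close> deg_eq R_sub
          R_apart card_R])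
qed

lemma max_degree_vertices_matching:
  assumes "simple_graph V E" "connected_graph V E" "E \<noteq> {}" "card V \<le> 3 * max_degree V E + 2"
  shows "\<exists>M. matching E M \<and> \<Union>M \<subseteq> max_degree_vertices V E \<and>
    2 * card (max_degree_vertices V E) \<le> 2 * card M + card V + 1"
proof -
  define S where "S = max_degree_vertices V E"
  have "S \<subseteq> V" by (auto simp: S_def max_degree_vertices_def)
  then have "simple_graph S {e\<in>E. e \<subseteq> S}"
    using assms(1) finite_subset by (auto simp: simple_graph_def)
  then obtain M X R where MXR: "tutte_berge_witness S {e\<in>E. e \<subseteq> S} M X R"
    using exists_tutte_berge_witness by blast
  then have "matching E M" "\<Union>M \<subseteq> S" by (auto simp: tutte_berge_witness_def matching_def)
  moreover have "2 * card S \<le> 2 * card M + card V + 1"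
  proof (rule ccontr)
    assume "\<not> ?thesis"
    then have "3 * max_degree V E + 3 \<le> card V"
      using card_ge_of_max_degree_witness[OF assms(1-3) S_def MXR] by linarith
    then show False using assms(4) by linarith
  qed
  ultimately show ?thesis unfolding S_def by blast
qed

theorem theorem5p5:
  fixes V :: "'a set" and E :: "'a set set"
  assumes "simple_graph V E"
    and "connected_graph V E"
    and "E \<noteq> {}"
    and "3 * real (max_degree V E) \<ge> real (card V) - 2"
  shows "real (es_Delta V E) \<le> real_of_int \<lceil>real (card V) / 2\<rceil>"
proof -
  have "real (card V) \<le> real (3 * max_degree V E + 2)" using assms(4) by simp
  then have "card V \<le> 3 * max_degree V E + 2" by (simp only: of_nat_le_iff)
  then obtain M where "matching E M" "\<Union>M \<subseteq> max_degree_vertices V E"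
    and card_M: "2 * card (max_degree_vertices V E) \<le> 2 * card M + card V + 1"
    using max_degree_vertices_matching[OF assms(1-3)] by blast
  then have "es_Delta V E + card M \<le> card (max_degree_vertices V E)"
    using es_Delta_add_card_matching_le[OF assms(1,3)] by blast
  then have "2 * int (es_Delta V E) \<le> int (card V) + 1" using card_M by linarith
  moreover have "int (card V) \<le> 2 * \<lceil>real (card V) / 2\<rceil>"
    using le_of_int_ceiling[of "real (card V) / 2"] by linarith
  ultimately have "int (es_Delta V E) \<le> \<lceil>real (card V) / 2\<rceil>" by linarith
  then show ?thesis by linarith
qed

end
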